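(* Let $n\ge1$ be a natural number, let $a,b,\alpha,\beta$ be variables (with $\beta a-\alpha b\neq0$), and write $\Psi_r(n)=\Psi\left(\begin{array}{cc|c} a & b & n \\ \alpha & \beta & r \end{array}\right)$, $\Phi_r(n)=\Phi\left(\begin{array}{cc|c} a & b & n \\ \alpha & \beta & r \end{array}\right)$. Let $D=\alpha\frac{\partial}{\partial a}+\beta\frac{\partial}{\partial b}$ (so $\alpha,\beta$ are held constant). Then \[ \Psi_r(n)=-\frac{1}{r}\,D\,\Psi_{r-1}(n)\quad\text{for }1\le r\le\lfloor n/2\rfloor,\qquad \Phi_r(n)=-\frac{1}{r}\,D\,\Phi_{r-1}(n)\quad\text{for }1\le r\le\lfloor (n-1)/2\rfloor. \]
   Context: $\delta(m)=1$ for $m$ odd, $0$ for $m$ even; $\lfloor\cdot\rfloor$ is the floor. For indeterminates $a,b,\alpha,\beta$ and $n\ge1$, $\Psi\left(\begin{array}{cc|c} a & b & n \\ \alpha & \beta & r \end{array}\right)$ ($0\le r\le\lfloor n/2\rfloor$) and $\Phi\left(\begin{array}{cc|c} a & b & n \\ \alpha & \beta & r \end{array}\right)$ ($0\le r\le\lfloor (n-1)/2\rfloor$) are the unique polynomials in $\mathbb{Z}[a,b,\alpha,\beta]$ such that, identically in $x,y$, $(\beta a-\alpha b)^{\lfloor n/2\rfloor}\frac{x^n+y^n}{(x+y)^{\delta(n)}}=\sum_{r}\Psi\left(\begin{array}{cc|c} a & b & n \\ \alpha & \beta & r \end{array}\right)(\alpha x^2+\beta xy+\alpha y^2)^{\lfloor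 n/2\rfloor-r}(ax^2+bxy+ay^2)^r$ and $(\beta a-\alpha b)^{\lfloor (n-1)/2\rfloor}\frac{x^n-y^n}{(x-y)(x+y)^{\delta(n-1)}}=\sum_{r}\Phi\left(\begin{array}{cc|c} a & b & n \\ \alpha & \beta & r \end{array}\right)(\alpha x^2+\beta xy+\alpha y^2)^{\lfloor (n-1)/2\rfloor-r}(ax^2+bxy+ay^2)^r$. *)

theory Defs
  imports "HOL-Computational_Algebra.Polynomial"
begin

text \<open>Polynomials in Z[a,b,alpha,beta], represented as nested univariate polynomials.
  Innermost variable: a; then b; then alpha; outermost: beta.\<close>

type_synonym mpoly = "int poly poly poly poly"

definition ev4 :: "mpoly \<Rightarrow> int \<Rightarrow> int \<Rightarrow> int \<Rightarrow> int \<Rightarrow> int" where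
  "ev4 P a b al be = poly (poly (poly (poly P [:[:[:be:]:]:]) [:[:al:]:]) [:b:]) a"

definition var_alpha :: mpoly where "var_alpha = [:[:0, 1:]:]"
definition var_beta :: mpoly where "var_beta = [:0, 1:]"

definition deriv_a :: "mpoly \<Rightarrow> mpoly" where
  "deriv_a P = map_poly (map_poly (map_poly pderiv)) P"
definition deriv_b :: "mpoly \<Rightarrow> mpoly" where
  "deriv_b P = map_poly (map_poly pderiv) P"

definition Dop :: "mpoly \<Rightarrow> mpoly" where
  "Dop P = var_alpha * deriv_a P + var_beta * deriv_b P"

definition delta :: "nat \<Rightarrow> nat" where
  "delta m = (if odd m then 1 else 0)"

text \<open>Defining identities (denominators cleared), required identically in a,b,alpha,beta,x,y.\<close>
definition is_Psi :: "nat \<Rightarrow> (nat \<Rightarrow> mpoly) \<Rightarrow> bool" where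
  "is_Psi n f \<longleftrightarrow> (\<forall>r > n div 2. f r = 0) \<and>
     (\<forall>a b al be x y :: int.
        (be * a - al * b) ^ (n div 2) * (x ^ n + y ^ n) =
        (x + y) ^ delta n *
        (\<Sum>r\<le>n div 2. ev4 (f r) a b al be *
            (al * x^2 + be * x * y + al * y^2) ^ (n div 2 - r) *
            (a * x^2 + b * x * y + a * y^2) ^ r))"

definition is_Phi :: "nat \<Rightarrow> (nat \<Rightarrow> mpoly) \<Rightarrow> bool" where
  "is_Phi n f \<longleftrightarrow> (\<forall>r > (n - 1) div 2. f r = 0) \<and>
     (\<forall>a b al be x y :: int.
        (be * a - al * b) ^ ((n - 1) div 2) * (x ^ n - y ^ n) =
        (x - y) * (x + y) ^ delta (n - 1) *
        (\<Sum>r\<le>(n - 1) div 2. ev4 (f r) a b al be *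
            (al * x^2 + be * x * y + al * y^2) ^ ((n - 1) div 2 - r) *
            (a * x^2 + b * x * y + a * y^2) ^ r))"

definition Psi :: "nat \<Rightarrow> nat \<Rightarrow> mpoly" where
  "Psi n = (THE f. is_Psi n f)"

definition Phi :: "nat \<Rightarrow> nat \<Rightarrow> mpoly" where
  "Phi n = (THE f. is_Phi n f)"

end

theory Submission
  imports Defs "HOL-Computational_Algebra.Fundamental_Theorem_Algebra"
begin

(* Put U = \<alpha>x\<^sup>2 + \<beta>xy + \<alpha>y\<^sup>2, V = ax\<^sup>2 + bxy + ay\<^sup>2 and \<Delta> = \<beta>a - \<alpha>b, so that
   \<Delta>(x\<^sup>2 + y\<^sup>2) = \<beta>V - bU and \<Delta>xy = aU - \<alpha>V.  The power sums in question obey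
   s(m+2) = (x\<^sup>2 + y\<^sup>2) s(m+1) - (xy)\<^sup>2 s(m); running this recurrence on the linear
   polynomials \<beta>t - b and a - \<alpha>t (t standing for V/U) produces polynomials \<Sum> c(r) t\<^sup>r whose
   coefficients are the \<Psi>(r), \<Phi>(r).  The operator D + d/dt is a derivation killing both linear
   polynomials, hence everything the recurrence produces, and its coefficient of t\<^bsup>r-1\<^esup> is
   D c(r-1) + r c(r).  Identifying the coefficients with \<Psi>, \<Phi> needs their uniqueness: the
   forms U\<^bsup>m-r\<^esup> V\<^sup>r are linearly independent when \<Delta> \<noteq> 0, as one sees at a complex root of U. *)

locale derivation =
  fixes F :: "'a::comm_ring_1 \<Rightarrow> 'a"
  assumes add: "F (x + y) = F x + F y"
    and mult: "F (x * y) = x * F y + F x * y"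
begin

lemma zero [simp]: "F 0 = 0"
  using add[of 0 0] by simp

lemma minus: "F (- x) = - F x"
  using add[of x "- x"] by (simp add: eq_neg_iff_add_eq_0 add.commute)

lemma diff: "F (x - y) = F x - F y"
  using add[of x "- y"] by (simp add: minus)

lemma sum: "F (sum g A) = (\<Sum>i\<in>A. F (g i))"
  by (induction A rule: infinite_finite_induct) (simp_all add: add)

lemma one [simp]: "F 1 = 0"
  using mult[of 1 1] by simp

lemma of_nat [simp]: "F (of_nat k) = 0"
  by (induction k) (simp_all add: add)

lemma numeral [simp]: "F (numeral k) = 0"
  using of_nat[of "numeral k"] by simp

lemma map_poly: "derivation (map_poly F)"
proof
  fix p q :: "'a poly"
  show "map_poly F (p + q) = map_poly F p + map_poly F q"
    by (rule poly_eqI) (simp add: coeff_map_poly add)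
  show "map_poly F (p * q) = p * map_poly F q + map_poly F p * q"
    by (rule poly_eqI) (simp add: coeff_map_poly coeff_mult sum mult sum.distrib)
qed

end

lemma derivation_pderiv: "derivation (pderiv :: 'a::idom poly \<Rightarrow> 'a poly)"
  by standard (simp_all add: pderiv_add pderiv_mult algebra_simps)

lemma derivation_add:
  "derivation F \<Longrightarrow> derivation G \<Longrightarrow> derivation (\<lambda>x. F x + G x)"
  unfolding derivation_def by (simp add: algebra_simps)

lemma derivation_mult_left: "derivation F \<Longrightarrow> derivation (\<lambda>x. c * F x)"
  unfolding derivation_def by (simp add: algebra_simps)

fun lin_rec :: "'a::comm_ring_1 \<Rightarrow> 'a \<Rightarrow> 'a \<Rightarrow> 'a \<Rightarrow> nat \<Rightarrow> 'a" where
  "lin_rec p q u0 u1 0 = u0"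
| "lin_rec p q u0 u1 (Suc 0) = u1"
| "lin_rec p q u0 u1 (Suc (Suc m)) = p * lin_rec p q u0 u1 (Suc m) - q * lin_rec p q u0 u1 m"

lemma lin_rec_unique:
  assumes "\<And>m. f (Suc (Suc m)) = p * f (Suc m) - q * f m"
  shows "f m = lin_rec p q (f 0) (f 1) m"
  by (induction m rule: induct_nat_012) (simp_all add: assms)

lemma lin_rec_geometric:
  "A * s ^ m + B * t ^ m = lin_rec (s + t) (s * t) (A + B) (A * s + B * t) m"
  by (rule lin_rec_unique[where f = "\<lambda>m. A * s ^ m + B * t ^ m", simplified])
    (simp add: algebra_simps)

lemma lin_rec_mult_initial:
  "lin_rec p q (c * u0) (c * u1) m = c * lin_rec p q u0 u1 m"
  by (induction p q u0 u1 m rule: lin_rec.induct) (simp_all add: algebra_simps)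

lemma lin_rec_scale:
  "lin_rec (d * p) (d\<^sup>2 * q) u0 (d * u1) m = d ^ m * lin_rec p q u0 u1 m"
  by (induction p q u0 u1 m rule: lin_rec.induct) (simp_all add: algebra_simps power2_eq_square)

lemma (in derivation) lin_rec_eq_0:
  "F p = 0 \<Longrightarrow> F q = 0 \<Longrightarrow> F u0 = 0 \<Longrightarrow> F u1 = 0 \<Longrightarrow> F (lin_rec p q u0 u1 m) = 0"
  by (induction p q u0 u1 m rule: lin_rec.induct) (simp_all add: diff mult)

lemma degree_lin_rec:
  assumes "degree p \<le> 1" "degree q \<le> 2" "degree u0 = 0" "degree u1 \<le> 1"
  shows "degree (lin_rec p q u0 u1 m) \<le> m"
proof (induction m rule: induct_nat_012)
  case (ge2 m)
  have "degree (p * lin_rec p q u0 u1 (Suc m)) \<le> Suc (Suc m)"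
    using degree_mult_le[of p "lin_rec p q u0 u1 (Suc m)"] ge2 assms(1) by linarith
  moreover have "degree (q * lin_rec p q u0 u1 m) \<le> Suc (Suc m)"
    using degree_mult_le[of q "lin_rec p q u0 u1 m"] ge2 assms(2) by linarith
  ultimately show ?case
    by (simp add: degree_diff_le)
qed (use assms in auto)

definition homog_sum :: "(nat \<Rightarrow> 'a::comm_semiring_1) \<Rightarrow> nat \<Rightarrow> 'a \<Rightarrow> 'a \<Rightarrow> 'a" where
  "homog_sum c m u v = (\<Sum>r\<le>m. c r * u ^ (m - r) * v ^ r)"

lemma homog_sum_Suc:
  "c (Suc m) = 0 \<Longrightarrow> homog_sum c (Suc m) u v = u * homog_sum c m u v"
  by (simp add: homog_sum_def sum_distrib_left Suc_diff_le algebra_simps)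

lemma homog_sum_coeff_pCons_0:
  "homog_sum (coeff (pCons 0 p)) (Suc m) u v = v * homog_sum (coeff p) m u v"
  unfolding homog_sum_def by (subst sum.atMost_Suc_shift) (simp add: sum_distrib_left algebra_simps)

lemma homog_sum_coeff_add:
  "homog_sum (coeff (p + q)) m u v = homog_sum (coeff p) m u v + homog_sum (coeff q) m u v"
  by (simp add: homog_sum_def algebra_simps sum.distrib)

lemma homog_sum_coeff_diff:
  fixes p q :: "'a::comm_ring_1 poly"
  shows "homog_sum (coeff (p - q)) m u v = homog_sum (coeff p) m u v - homog_sum (coeff q) m u v"
  by (simp add: homog_sum_def algebra_simps sum_subtractf)

lemma homog_sum_coeff_smult:
  "homog_sum (coeff (smult c p)) m u v = c * homog_sum (coeff p) m u v"
  by (simp add: homog_sum_def algebra_simps sum_distrib_left)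

lemma homog_sum_coeff_linear_mult:
  fixes p q :: "'a::comm_ring_1 poly"
  assumes "degree p \<le> 1" "degree q \<le> m"
  shows "homog_sum (coeff (p * q)) (Suc m) u v =
    homog_sum (coeff p) 1 u v * homog_sum (coeff q) m u v"
proof -
  have p: "p = [:coeff p 0, coeff p 1:]"
    by (rule poly_eqI) (use assms(1) in \<open>auto simp: coeff_pCons coeff_eq_0 split: nat.split\<close>)
  have "p * q = smult (coeff p 0) q + pCons 0 (smult (coeff p 1) q)"
    by (subst p) simp
  then show ?thesis
    using assms(2) by (simp add: homog_sum_coeff_add homog_sum_coeff_smult homog_sum_Suc
        homog_sum_coeff_pCons_0 coeff_eq_0) (simp add: homog_sum_def algebra_simps)
qed

lemma homog_sum_coeff_lin_rec:
  fixes p q u0 u1 :: "'a::comm_ring_1 poly"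
  assumes "degree p \<le> 1" "degree q \<le> 1" "degree u0 = 0" "degree u1 \<le> 1"
  shows "homog_sum (coeff (lin_rec p (q\<^sup>2) u0 u1 m)) m u v =
    lin_rec (homog_sum (coeff p) 1 u v) ((homog_sum (coeff q) 1 u v)\<^sup>2)
      (coeff u0 0) (homog_sum (coeff u1) 1 u v) m"
proof (induction m rule: induct_nat_012)
  case (ge2 m)
  let ?w = "lin_rec p (q\<^sup>2) u0 u1"
  have "degree (q\<^sup>2) \<le> 2"
    using degree_power_le[of q 2] assms(2) by simp
  then have deg: "degree (?w m) \<le> m" "degree (?w (Suc m)) \<le> Suc m"
    using degree_lin_rec assms by blast+
  then have "degree (q * ?w m) \<le> Suc m"
    using degree_mult_le[of q "?w m"] assms(2) by linarith
  with deg have "homog_sum (coeff (?w (Suc (Suc m)))) (Suc (Suc m)) u v =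
      homog_sum (coeff p) 1 u v * homog_sum (coeff (?w (Suc m))) (Suc m) u v -
      homog_sum (coeff q) 1 u v * (homog_sum (coeff q) 1 u v * homog_sum (coeff (?w m)) m u v)"
    using homog_sum_coeff_linear_mult[OF assms(1) deg(2)] homog_sum_coeff_linear_mult[OF assms(2)]
    by (simp add: homog_sum_coeff_diff power2_eq_square mult.assoc)
  with ge2 show ?case
    by (simp del: coeff_diff add: power2_eq_square mult.assoc)
qed (simp_all add: homog_sum_def)

lemma power_sum_eq_lin_rec:
  assumes "A + B = c * u0" "A * x\<^sup>2 + B * y\<^sup>2 = c * u1"
  shows "A * (x\<^sup>2) ^ m + B * (y\<^sup>2) ^ m = c * lin_rec (x\<^sup>2 + y\<^sup>2) ((x * y)\<^sup>2) u0 u1 m"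
  using lin_rec_geometric[of A "x\<^sup>2" m B "y\<^sup>2"]
  by (simp add: assms lin_rec_mult_initial power_mult_distrib)

definition var_a :: mpoly where "var_a = [:[:[:[:0, 1:]:]:]:]"
definition var_b :: mpoly where "var_b = [:[:[:0, 1:]:]:]"

lemma ev4_simps [simp]:
  "ev4 (P + Q) a b al be = ev4 P a b al be + ev4 Q a b al be"
  "ev4 (P - Q) a b al be = ev4 P a b al be - ev4 Q a b al be"
  "ev4 (P * Q) a b al be = ev4 P a b al be * ev4 Q a b al be"
  "ev4 (- P) a b al be = - ev4 P a b al be"
  "ev4 (P ^ k) a b al be = ev4 P a b al be ^ k"
  "ev4 0 a b al be = 0"
  "ev4 (sum f A) a b al be = (\<Sum>i\<in>A. ev4 (f i) a b al be)"
  "ev4 (of_int z) a b al be = z"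
  "ev4 var_a a b al be = a" "ev4 var_b a b al be = b"
  "ev4 var_alpha a b al be = al" "ev4 var_beta a b al be = be"
  by (simp_all add: ev4_def poly_sum var_a_def var_b_def var_alpha_def var_beta_def)

lemma ev4_homog_sum:
  "ev4 (homog_sum c m u v) a b al be =
    homog_sum (\<lambda>r. ev4 (c r) a b al be) m (ev4 u a b al be) (ev4 v a b al be)"
  by (simp add: homog_sum_def)

lemma derivation_Dop: "derivation Dop"
proof -
  have "derivation deriv_a" "derivation deriv_b"
    unfolding deriv_a_def[abs_def] deriv_b_def[abs_def]
    by (intro derivation.map_poly derivation_pderiv)+
  then show ?thesis
    unfolding Dop_def[abs_def] by (intro derivation_add derivation_mult_left)
qed

lemma Dop_vars [simp]:
  "Dop var_a = var_alpha" "Dop var_b = var_beta" "Dop var_alpha = 0" "Dop var_beta = 0"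
  by (simp_all add: Dop_def deriv_a_def deriv_b_def var_a_def var_b_def var_alpha_def
      var_beta_def map_poly_pCons pderiv_pCons one_pCons)

definition Delta :: mpoly where "Delta = var_beta * var_a - var_alpha * var_b"

lemma Delta_neq_0: "Delta \<noteq> 0"
proof
  assume "Delta = 0"
  then have "ev4 Delta 1 0 0 1 = 0"
    by simp
  then show False
    by (simp add: Delta_def)
qed

definition sym_quad :: "'a::comm_ring_1 \<Rightarrow> 'a \<Rightarrow> 'a \<Rightarrow> 'a \<Rightarrow> 'a" where
  "sym_quad c d x y = c * (x\<^sup>2 + y\<^sup>2) + d * (x * y)"

lemma sym_quad_eq: "sym_quad c d x y = c * x\<^sup>2 + d * x * y + c * y\<^sup>2"
  by (simp add: sym_quad_def algebra_simps)

abbreviation form_U :: "mpoly \<Rightarrow> mpoly \<Rightarrow> mpoly" where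
  "form_U x y \<equiv> sym_quad var_alpha var_beta x y"

abbreviation form_V :: "mpoly \<Rightarrow> mpoly \<Rightarrow> mpoly" where
  "form_V x y \<equiv> sym_quad var_a var_b x y"

definition sum_sq_poly :: "mpoly poly" where "sum_sq_poly = [:- var_b, var_beta:]"
definition prod_poly :: "mpoly poly" where "prod_poly = [:var_a, - var_alpha:]"

lemma degree_sum_sq_poly: "degree sum_sq_poly \<le> 1"
  and degree_prod_poly: "degree prod_poly \<le> 1"
  and degree_sum_sq_minus_prod_poly: "degree (sum_sq_poly - prod_poly) \<le> 1"
  and degree_sum_sq_plus_prod_poly: "degree (sum_sq_poly + prod_poly) \<le> 1"
  by (simp_all add: sum_sq_poly_def prod_poly_def)

lemma homog_sum_sum_sq_poly:
  "homog_sum (coeff sum_sq_poly) 1 (form_U x y) (form_V x y) = Delta * (x\<^sup>2 + y\<^sup>2)"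
  by (simp add: homog_sum_def sum_sq_poly_def sym_quad_def Delta_def algebra_simps)

lemma homog_sum_prod_poly:
  "homog_sum (coeff prod_poly) 1 (form_U x y) (form_V x y) = Delta * (x * y)"
  by (simp add: homog_sum_def prod_poly_def sym_quad_def Delta_def algebra_simps)

lemma homog_sum_sum_sq_minus_prod_poly:
  "homog_sum (coeff (sum_sq_poly - prod_poly)) 1 (form_U x y) (form_V x y) =
    Delta * (x\<^sup>2 + y\<^sup>2 - x * y)"
  and homog_sum_sum_sq_plus_prod_poly:
  "homog_sum (coeff (sum_sq_poly + prod_poly)) 1 (form_U x y) (form_V x y) =
    Delta * (x\<^sup>2 + y\<^sup>2 + x * y)"
  unfolding homog_sum_coeff_diff homog_sum_coeff_add homog_sum_sum_sq_poly homog_sum_prod_poly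
  by (simp_all add: algebra_simps)

lemma power_sum_eq_homog_sum_lin_rec:
  assumes "degree w0 = 0" "degree w1 \<le> 1"
    and "homog_sum (coeff w1) 1 (form_U x y) (form_V x y) = Delta * u1"
    and "A + B = c * coeff w0 0" "A * x\<^sup>2 + B * y\<^sup>2 = c * u1"
  shows "Delta ^ m * (A * (x\<^sup>2) ^ m + B * (y\<^sup>2) ^ m) = c *
    homog_sum (coeff (lin_rec sum_sq_poly (prod_poly\<^sup>2) w0 w1 m)) m (form_U x y) (form_V x y)"
proof -
  from homog_sum_coeff_lin_rec[OF degree_sum_sq_poly degree_prod_poly assms(1,2)]
  have "homog_sum (coeff (lin_rec sum_sq_poly (prod_poly\<^sup>2) w0 w1 m)) m (form_U x y) (form_V x y) =
    lin_rec (Delta * (x\<^sup>2 + y\<^sup>2)) (Delta\<^sup>2 * (x * y)\<^sup>2) (coeff w0 0) (Delta * u1) m"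
    by (simp only: homog_sum_sum_sq_poly homog_sum_prod_poly assms(3) power_mult_distrib)
  also have "\<dots> = Delta ^ m * lin_rec (x\<^sup>2 + y\<^sup>2) ((x * y)\<^sup>2) (coeff w0 0) u1 m"
    by (rule lin_rec_scale)
  finally show ?thesis
    using power_sum_eq_lin_rec[OF assms(4,5)] by simp
qed

(* The initial terms are the quotients for the two smallest n of each parity,
   e.g. (x\<^sup>3 + y\<^sup>3)/(x + y) = x\<^sup>2 + y\<^sup>2 - xy. *)
definition Psi_poly :: "nat \<Rightarrow> mpoly poly" where
  "Psi_poly n = (if even n
     then lin_rec sum_sq_poly (prod_poly\<^sup>2) 2 sum_sq_poly (n div 2)
     else lin_rec sum_sq_poly (prod_poly\<^sup>2) 1 (sum_sq_poly - prod_poly) (n div 2))"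

definition Phi_poly :: "nat \<Rightarrow> mpoly poly" where
  "Phi_poly n = (if even n
     then lin_rec sum_sq_poly (prod_poly\<^sup>2) 1 sum_sq_poly ((n - 1) div 2)
     else lin_rec sum_sq_poly (prod_poly\<^sup>2) 1 (sum_sq_poly + prod_poly) ((n - 1) div 2))"

lemma degree_Psi_poly: "degree (Psi_poly n) \<le> n div 2"
  and degree_Phi_poly: "degree (Phi_poly n) \<le> (n - 1) div 2"
proof -
  have "degree (prod_poly\<^sup>2) \<le> 2"
    using degree_power_le[of prod_poly 2] degree_prod_poly by simp
  then show "degree (Psi_poly n) \<le> n div 2" "degree (Phi_poly n) \<le> (n - 1) div 2"
    using degree_lin_rec[OF degree_sum_sq_poly] degree_sum_sq_poly degree_sum_sq_minus_prod_poly
      degree_sum_sq_plus_prod_poly by (simp_all add: Psi_poly_def Phi_poly_def)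
qed

lemma homog_sum_Psi_poly:
  "Delta ^ (n div 2) * (x ^ n + y ^ n) = (x + y) ^ delta n *
    homog_sum (coeff (Psi_poly n)) (n div 2) (form_U x y) (form_V x y)"
proof (cases "even n")
  case True
  then obtain m where n: "n = 2 * m"
    by blast
  have "Delta ^ m * (1 * (x\<^sup>2) ^ m + 1 * (y\<^sup>2) ^ m) = 1 *
    homog_sum (coeff (lin_rec sum_sq_poly (prod_poly\<^sup>2) 2 sum_sq_poly m)) m
      (form_U x y) (form_V x y)"
    by (rule power_sum_eq_homog_sum_lin_rec[OF _ degree_sum_sq_poly homog_sum_sum_sq_poly])
      (simp_all add: numeral_poly)
  then show ?thesis
    by (simp add: n Psi_poly_def delta_def power_mult)
next
  case False
  then obtain m where n: "n = 2 * m + 1"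
    using oddE by blast
  have "Delta ^ m * (x * (x\<^sup>2) ^ m + y * (y\<^sup>2) ^ m) = (x + y) *
    homog_sum (coeff (lin_rec sum_sq_poly (prod_poly\<^sup>2) 1 (sum_sq_poly - prod_poly) m)) m
      (form_U x y) (form_V x y)"
    by (rule power_sum_eq_homog_sum_lin_rec[OF _ degree_sum_sq_minus_prod_poly
          homog_sum_sum_sq_minus_prod_poly])
      (simp_all add: algebra_simps power2_eq_square)
  then show ?thesis
    by (simp add: n Psi_poly_def delta_def power_mult)
qed

lemma homog_sum_Phi_poly:
  assumes "n \<ge> 1"
  shows "Delta ^ ((n - 1) div 2) * (x ^ n - y ^ n) = (x - y) * (x + y) ^ delta (n - 1) *
    homog_sum (coeff (Phi_poly n)) ((n - 1) div 2) (form_U x y) (form_V x y)"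
proof (cases "even n")
  case True
  then obtain k where "n = 2 * k"
    by blast
  with assms obtain m where n: "n = 2 * m + 2"
    by (cases k) auto
  have "Delta ^ m * (x\<^sup>2 * (x\<^sup>2) ^ m + (- y\<^sup>2) * (y\<^sup>2) ^ m) = ((x - y) * (x + y)) *
    homog_sum (coeff (lin_rec sum_sq_poly (prod_poly\<^sup>2) 1 sum_sq_poly m)) m
      (form_U x y) (form_V x y)"
    by (rule power_sum_eq_homog_sum_lin_rec[OF _ degree_sum_sq_poly homog_sum_sum_sq_poly])
      (simp_all add: algebra_simps power2_eq_square)
  moreover have "x ^ n - y ^ n = x\<^sup>2 * (x\<^sup>2) ^ m + (- y\<^sup>2) * (y\<^sup>2) ^ m"
    by (simp add: n power_mult[symmetric] power_add[symmetric] add.commute)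
  ultimately show ?thesis
    by (simp add: n Phi_poly_def delta_def mult.assoc)
next
  case False
  then obtain m where n: "n = 2 * m + 1"
    using oddE by blast
  have "Delta ^ m * (x * (x\<^sup>2) ^ m + (- y) * (y\<^sup>2) ^ m) = (x - y) *
    homog_sum (coeff (lin_rec sum_sq_poly (prod_poly\<^sup>2) 1 (sum_sq_poly + prod_poly) m)) m
      (form_U x y) (form_V x y)"
    by (rule power_sum_eq_homog_sum_lin_rec[OF _ degree_sum_sq_plus_prod_poly
          homog_sum_sum_sq_plus_prod_poly])
      (simp_all add: algebra_simps power2_eq_square)
  then show ?thesis
    by (simp add: n Phi_poly_def delta_def power_mult)
qed

lemma is_Psi_Psi_poly: "is_Psi n (coeff (Psi_poly n))"
proof -
  have "(be * a - al * b) ^ (n div 2) * (x ^ n + y ^ n) = (x + y) ^ delta n *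
      homog_sum (\<lambda>r. ev4 (coeff (Psi_poly n) r) a b al be) (n div 2)
        (sym_quad al be x y) (sym_quad a b x y)" for a b al be x y :: int
    using arg_cong[where f = "\<lambda>P. ev4 P a b al be",
        OF homog_sum_Psi_poly[of n "of_int x" "of_int y"]]
    by (simp add: ev4_homog_sum sym_quad_def Delta_def)
  then show ?thesis
    using degree_Psi_poly[of n] by (auto simp: is_Psi_def homog_sum_def sym_quad_eq coeff_eq_0)
qed

lemma is_Phi_Phi_poly:
  assumes "n \<ge> 1"
  shows "is_Phi n (coeff (Phi_poly n))"
proof -
  have "(be * a - al * b) ^ ((n - 1) div 2) * (x ^ n - y ^ n) = (x - y) * (x + y) ^ delta (n - 1) *
      homog_sum (\<lambda>r. ev4 (coeff (Phi_poly n) r) a b al be) ((n - 1) div 2)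
        (sym_quad al be x y) (sym_quad a b x y)" for a b al be x y :: int
    using arg_cong[where f = "\<lambda>P. ev4 P a b al be",
        OF homog_sum_Phi_poly[OF assms, of "of_int x" "of_int y"]]
    by (simp add: ev4_homog_sum sym_quad_def Delta_def)
  then show ?thesis
    using degree_Phi_poly[of n] by (auto simp: is_Phi_def homog_sum_def sym_quad_eq coeff_eq_0)
qed

lemma homog_sum_const_poly_eq_0_imp:
  fixes U V :: "'a::idom poly"
  assumes "poly U z = 0" "poly V z \<noteq> 0" "U \<noteq> 0"
    and "homog_sum (\<lambda>r. [:e r:]) m U V = 0" "r \<le> m"
  shows "e r = 0"
  using assms(4,5)
proof (induction m arbitrary: r)
  case (Suc m)
  have "poly (homog_sum (\<lambda>r. [:e r:]) (Suc m) U V) z = e (Suc m) * poly V z ^ Suc m"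
    using assms(1) by (simp add: homog_sum_def poly_sum Suc_diff_le)
  with Suc.prems(1) assms(2) have e: "e (Suc m) = 0"
    by simp
  then have "U * homog_sum (\<lambda>r. [:e r:]) m U V = 0"
    using Suc.prems(1) by (simp add: homog_sum_Suc)
  with assms(3) Suc.IH e Suc.prems(2) show ?case
    by (cases "r = Suc m") auto
qed (simp add: homog_sum_def)

lemma poly_eq_0_if_infinite_roots:
  fixes p :: "'a::idom poly"
  assumes "infinite A" "\<And>z. z \<in> A \<Longrightarrow> poly p z = 0"
  shows "p = 0"
proof (rule ccontr)
  assume "p \<noteq> 0"
  have "A \<subseteq> {z. poly p z = 0}"
    using assms(2) by blast
  then have "finite A"
    using poly_roots_finite[OF \<open>p \<noteq> 0\<close>] by (rule finite_subset)
  with assms(1) show False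
    by simp
qed

lemma homog_sum_sym_quad_eq_0_imp:
  fixes e :: "nat \<Rightarrow> int"
  assumes "be * a - al * b \<noteq> 0"
    and "\<And>x. x \<ge> 2 \<Longrightarrow> homog_sum e m (sym_quad al be x 1) (sym_quad a b x 1) = 0"
    and "r \<le> m"
  shows "e r = 0"
proof -
  define U where "U = [:complex_of_int al, of_int be, of_int al:]"
  define V where "V = [:complex_of_int a, of_int b, of_int a:]"
  have roots: "homog_sum (\<lambda>r. [:of_int (e r):]) m U V = 0"
  proof (rule poly_eq_0_if_infinite_roots)
    show "infinite (range (\<lambda>k. of_int (int k + 2)) :: complex set)"
      by (rule range_inj_infinite) (simp add: inj_def)
    show "poly (homog_sum (\<lambda>r. [:of_int (e r):]) m U V) z = 0"
      if "z \<in> range (\<lambda>k. of_int (int k + 2))" for z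
    proof -
      from that obtain k where "z = of_int (int k + 2)"
        by blast
      moreover have "int k + 2 \<ge> 2"
        by simp
      ultimately obtain x where x: "x \<ge> 2" "z = of_int x"
        by blast
      have "poly (homog_sum (\<lambda>r. [:of_int (e r):]) m U V) z =
          of_int (homog_sum e m (sym_quad al be x 1) (sym_quad a b x 1))"
        by (simp add: x U_def V_def homog_sum_def sym_quad_def poly_sum algebra_simps
            power2_eq_square)
      with assms(2)[OF x(1)] show ?thesis
        by simp
    qed
  qed
  have "degree U \<noteq> 0"
    using assms(1) by (auto simp: U_def)
  then have "\<not> constant (poly U)" and U_nz: "U \<noteq> 0"
    by (auto simp: constant_degree)
  then obtain z where z: "poly U z = 0"
    using fundamental_theorem_of_algebra by blast
  have V_nz: "poly V z \<noteq> 0"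
  proof
    assume v: "poly V z = 0"
    have "of_int a * poly U z - of_int al * poly V z = of_int (be * a - al * b) * z"
      by (simp add: U_def V_def algebra_simps)
    with z v assms(1) have "z = 0"
      by (simp del: of_int_diff of_int_mult)
    with z v have "al = 0" "a = 0"
      by (simp_all add: U_def V_def)
    with assms(1) show False
      by simp
  qed
  have "complex_of_int (e r) = 0"
    by (rule homog_sum_const_poly_eq_0_imp[where e = "\<lambda>r. of_int (e r)",
          OF z V_nz U_nz roots assms(3)])
  then show ?thesis
    by simp
qed

lemma mpoly_eq_0_if_ev4_eq_0:
  assumes "\<And>a b al be. ev4 P a b al be = 0"
  shows "P = 0"
proof -
  have "poly (poly (poly P [:[:[:be:]:]:]) [:[:al:]:]) [:b:] = 0" for be al b
    using assms poly_all_0_iff_0 unfolding ev4_def by blast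
  then have "poly (poly P [:[:[:be:]:]:]) [:[:al:]:] = 0" for be al
    by (intro poly_eq_0_if_infinite_roots[OF range_inj_infinite[of "\<lambda>k. [:of_nat k:]"]])
      (auto simp: inj_def)
  then have "poly P [:[:[:be:]:]:] = 0" for be
    by (intro poly_eq_0_if_infinite_roots[OF range_inj_infinite[of "\<lambda>k. [:[:of_nat k:]:]"]])
      (auto simp: inj_def)
  then show "P = 0"
    by (intro poly_eq_0_if_infinite_roots[OF range_inj_infinite[of "\<lambda>k. [:[:[:of_nat k:]:]:]"]])
      (auto simp: inj_def)
qed

lemma mpoly_eq_if_homog_sums_eq:
  fixes f g :: "nat \<Rightarrow> mpoly" and k :: "int \<Rightarrow> int"
  assumes "\<And>a b al be x. be * a - al * b \<noteq> 0 \<Longrightarrow> x \<ge> 2 \<Longrightarrow>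
      k x * homog_sum (\<lambda>r. ev4 (f r) a b al be) m (sym_quad al be x 1) (sym_quad a b x 1) =
      k x * homog_sum (\<lambda>r. ev4 (g r) a b al be) m (sym_quad al be x 1) (sym_quad a b x 1)"
    and "\<And>x. x \<ge> 2 \<Longrightarrow> k x \<noteq> 0"
    and "r \<le> m"
  shows "f r = g r"
proof -
  (* The forms are independent only where \<Delta> \<noteq> 0, so it is (f r - g r) \<Delta> that vanishes
     at every integer point. *)
  have "(f r - g r) * Delta = 0"
  proof (rule mpoly_eq_0_if_ev4_eq_0)
    fix a b al be
    show "ev4 ((f r - g r) * Delta) a b al be = 0"
    proof (cases "be * a - al * b = 0")
      case True
      then show ?thesis
        by (simp add: Delta_def)
    next
      case False
      have "ev4 (f r) a b al be - ev4 (g r) a b al be = 0"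
      proof (rule homog_sum_sym_quad_eq_0_imp[OF False _ assms(3)])
        fix x :: int
        assume "x \<ge> 2"
        with assms(1)[OF False this] assms(2)
        show "homog_sum (\<lambda>r. ev4 (f r) a b al be - ev4 (g r) a b al be) m
            (sym_quad al be x 1) (sym_quad a b x 1) = 0"
          by (simp add: homog_sum_def sum_subtractf left_diff_distrib)
      qed
      then show ?thesis
        by simp
    qed
  qed
  with Delta_neq_0 show ?thesis
    by simp
qed

lemma is_Psi_unique:
  assumes "is_Psi n f" "is_Psi n g"
  shows "f = g"
proof
  fix r
  show "f r = g r"
  proof (cases "r \<le> n div 2")
    case False
    with assms show ?thesis
      by (simp add: is_Psi_def)
  next
    case True
    have at_1: "(be * a - al * b) ^ (n div 2) * (x ^ n + 1) = (x + 1) ^ delta n *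
        homog_sum (\<lambda>r. ev4 (h r) a b al be) (n div 2) (sym_quad al be x 1) (sym_quad a b x 1)"
      if "is_Psi n h" for h a b al be x
      using conjunct2[OF that[unfolded is_Psi_def], rule_format, where a = a and b = b and al = al
          and be = be and x = x and y = 1]
      by (simp add: homog_sum_def sym_quad_eq)
    show ?thesis
      by (rule mpoly_eq_if_homog_sums_eq[where k = "\<lambda>x. (x + 1) ^ delta n", OF _ _ True])
        (rule trans[OF sym[OF at_1[OF assms(1)]] at_1[OF assms(2)]], simp)
  qed
qed

lemma is_Phi_unique:
  assumes "is_Phi n f" "is_Phi n g"
  shows "f = g"
proof
  fix r
  show "f r = g r"
  proof (cases "r \<le> (n - 1) div 2")
    case False
    with assms show ?thesis
      by (simp add: is_Phi_def)
  next
    case True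
    have at_1: "(be * a - al * b) ^ ((n - 1) div 2) * (x ^ n - 1) =
        (x - 1) * (x + 1) ^ delta (n - 1) * homog_sum (\<lambda>r. ev4 (h r) a b al be) ((n - 1) div 2) (sym_quad al be x 1) (sym_quad a b x 1)"
      if "is_Phi n h" for h a b al be x
      using conjunct2[OF that[unfolded is_Phi_def], rule_format, where a = a and b = b and al = al
          and be = be and x = x and y = 1]
      by (simp add: homog_sum_def sym_quad_eq)
    show ?thesis
      by (rule mpoly_eq_if_homog_sums_eq[where k = "\<lambda>x. (x - 1) * (x + 1) ^ delta (n - 1)",
            OF _ _ True])
        (rule trans[OF sym[OF at_1[OF assms(1)]] at_1[OF assms(2)]], simp)
  qed
qed

lemma Psi_eq_coeff_Psi_poly: "Psi n = coeff (Psi_poly n)"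
  unfolding Psi_def
  by (rule the_equality[where P = "is_Psi n", OF is_Psi_Psi_poly is_Psi_unique[OF _ is_Psi_Psi_poly]])

lemma Phi_eq_coeff_Phi_poly:
  assumes "n \<ge> 1"
  shows "Phi n = coeff (Phi_poly n)"
  unfolding Phi_def
  by (rule the_equality[where P = "is_Phi n", OF is_Phi_Phi_poly[OF assms]
        is_Phi_unique[OF _ is_Phi_Phi_poly[OF assms]]])

definition Dop_plus_pderiv :: "mpoly poly \<Rightarrow> mpoly poly" where
  "Dop_plus_pderiv p = map_poly Dop p + pderiv p"

interpretation Dop: derivation Dop
  by (rule derivation_Dop)

interpretation Dop_plus_pderiv: derivation Dop_plus_pderiv
  unfolding Dop_plus_pderiv_def[abs_def]
  by (intro derivation_add Dop.map_poly derivation_pderiv)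

lemma Dop_plus_pderiv_sum_sq_poly: "Dop_plus_pderiv sum_sq_poly = 0"
  and Dop_plus_pderiv_prod_poly: "Dop_plus_pderiv prod_poly = 0"
  by (simp_all add: Dop_plus_pderiv_def sum_sq_poly_def prod_poly_def map_poly_pCons pderiv_pCons
      Dop.minus)

lemma Dop_plus_pderiv_Psi_poly: "Dop_plus_pderiv (Psi_poly n) = 0"
  and Dop_plus_pderiv_Phi_poly: "Dop_plus_pderiv (Phi_poly n) = 0"
  by (simp_all add: Psi_poly_def Phi_poly_def Dop_plus_pderiv.lin_rec_eq_0 Dop_plus_pderiv.diff
      Dop_plus_pderiv.add Dop_plus_pderiv.mult power2_eq_square Dop_plus_pderiv_sum_sq_poly
      Dop_plus_pderiv_prod_poly)

lemma coeff_recurrence_if_Dop_plus_pderiv_eq_0: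
  assumes "Dop_plus_pderiv p = 0" "r \<ge> 1"
  shows "of_nat r * coeff p r = - Dop (coeff p (r - 1))"
proof -
  have "coeff (Dop_plus_pderiv p) (r - 1) = Dop (coeff p (r - 1)) + of_nat r * coeff p r"
    using assms(2) by (simp add: Dop_plus_pderiv_def coeff_map_poly coeff_pderiv)
  with assms(1) show ?thesis
    by (simp add: eq_neg_iff_add_eq_0 add.commute)
qed

theorem theorem8p1:
  fixes n :: nat
  assumes "n \<ge> 1"
  shows "(\<forall>r. 1 \<le> r \<and> r \<le> n div 2 \<longrightarrow>
            of_nat r * Psi n r = - Dop (Psi n (r - 1))) \<and>
         (\<forall>r. 1 \<le> r \<and> r \<le> (n - 1) div 2 \<longrightarrow>
            of_nat r * Phi n r = - Dop (Phi n (r - 1)))"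
  using coeff_recurrence_if_Dop_plus_pderiv_eq_0[OF Dop_plus_pderiv_Psi_poly]
    coeff_recurrence_if_Dop_plus_pderiv_eq_0[OF Dop_plus_pderiv_Phi_poly]
  by (simp add: Psi_eq_coeff_Psi_poly Phi_eq_coeff_Phi_poly[OF assms])

end
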